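(* Let $1<p<\infty$, $R>0$, $\alpha\in\mathbb{R}\setminus\{0\}$, and let $w$ be a positive smooth function on $[0,R]$ with $w(0)=1$. Let $\bar\lambda_p([0,R],w,\alpha)$ be the first eigenvalue of $$(p-1)|\varphi'|^{p-2}\varphi''+\frac{w'}{w}|\varphi'|^{p-2}\varphi'=-\lambda|\varphi|^{p-2}\varphi,\quad |\varphi'(0)|^{p-2}\varphi'(0)=\alpha|\varphi(0)|^{p-2}\varphi(0),\quad \varphi'(R)=0,$$ and let $u>0$ be a positive first eigenfunction. Then: (1) if $\alpha>0$, then $u'>0$ on $[0,R)$; (2) if $\alpha<0$, then $u'<0$ on $[0,R)$; (3) if $\alpha>0$ and $0<\bar R<R$, then $\bar\lambda_p([0,R],w,\alpha)<\bar\lambda_p([0,\bar R],w,\alpha)$ (where $w$ is restricted to $[0,\bar R]$). Assume in addition that $w$ is strictly log-concave, i.e. $(\log w)''<0$ on $[0,R)$. Then: (4) if $\alpha>0$, then $u'/u$ is monotone decreasing on $[0,R]$, and in particular $|u'/u|^{p-1}\le\alpha$ on $[0,R]$; (5) if $\alpha<0$, then $u'/u$ is monotone increasing on $[0,R]$, and in particular $|u'/u|^{p-1}\le-\alpha$ on $[0,R]$.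
   Context: The first eigenvalue is characterized by $\bar\lambda_p([0,R],w,\alpha)=\inf\{\int_0^R|u'|^pw\,dt+\alpha|u(0)|^p: u\in W^{1,p}([0,R],w\,dt),\ \int_0^R|u|^pw\,dt=1\}$; its eigenfunctions do not change sign. *)

theory Defs
  imports "HOL-Analysis.Analysis"
begin

text \<open>Signed power  |x|^(q-2) x = sgn x * |x|^(q-1).\<close>
definition spow :: "real \<Rightarrow> real \<Rightarrow> real" where
  "spow q x = sgn x * \<bar>x\<bar> powr (q - 1)"

definition smooth_on_interval :: "real \<Rightarrow> (real \<Rightarrow> real) \<Rightarrow> bool" where
  "smooth_on_interval R w \<longleftrightarrow>
     (\<forall>n. \<forall>t\<in>{0..R}. ((deriv ^^ n) w has_real_derivative (deriv ^^ Suc n) w t) (at t))"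

text \<open>Sobolev space W^{1,p}([0,R]) (one-dimensional, via the absolutely continuous
  representative): u has weak derivative g in L^p([0,R]).  Since w is positive and
  continuous on [0,R], W^{1,p}([0,R], w dt) coincides with W^{1,p}([0,R]).\<close>
definition W1p_pair :: "real \<Rightarrow> real \<Rightarrow> (real \<Rightarrow> real) \<Rightarrow> (real \<Rightarrow> real) \<Rightarrow> bool" where
  "W1p_pair p R u g \<longleftrightarrow>
     set_integrable lborel {0..R} g \<and>
     set_integrable lborel {0..R} (\<lambda>t. \<bar>g t\<bar> powr p) \<and>
     set_integrable lborel {0..R} (\<lambda>t. \<bar>u t\<bar> powr p) \<and>
     (\<forall>x\<in>{0..R}. u x = u 0 + (LBINT t:{0..x}. g t))"

definition lam_bar :: "real \<Rightarrow> real \<Rightarrow> (real \<Rightarrow> real) \<Rightarrow> real \<Rightarrow> real" where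
  "lam_bar p R w \<alpha> = Inf {(LBINT t:{0..R}. \<bar>g t\<bar> powr p * w t) + \<alpha> * \<bar>u 0\<bar> powr p
      | u g. W1p_pair p R u g \<and> (LBINT t:{0..R}. \<bar>u t\<bar> powr p * w t) = 1}"

text \<open>u (with derivative du) is an eigenfunction for eigenvalue lam of
  (p-1)|u'|^{p-2}u'' + (w'/w)|u'|^{p-2}u' = -lam |u|^{p-2}u on [0,R],
  |u'(0)|^{p-2}u'(0) = alpha |u(0)|^{p-2}u(0), u'(R) = 0.
  The term (p-1)|u'|^{p-2}u'' is read as (|u'|^{p-2}u')'.\<close>
definition is_eigenfunction ::
  "real \<Rightarrow> real \<Rightarrow> (real \<Rightarrow> real) \<Rightarrow> real \<Rightarrow> real \<Rightarrow> (real \<Rightarrow> real) \<Rightarrow> (real \<Rightarrow> real) \<Rightarrow> bool" where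
  "is_eigenfunction p R w \<alpha> lam u du \<longleftrightarrow>
     (\<forall>t\<in>{0..R}. (u has_real_derivative du t) (at t within {0..R})) \<and>
     continuous_on {0..R} du \<and>
     (\<forall>t\<in>{0..R}. ((\<lambda>s. spow p (du s)) has_real_derivative
          (- lam * spow p (u t) - deriv w t / w t * spow p (du t))) (at t within {0..R})) \<and>
     spow p (du 0) = \<alpha> * spow p (u 0) \<and>
     du R = 0"

end

theory Submission
  imports Defs
begin

text \<open>Write the equation as (w |u'|^{p-2} u')' = -\<lambda> w u^{p-1}. The flux w |u'|^{p-2} u' runs
  from \<alpha> u(0)^{p-1} to 0 and is strictly monotone, which forces sgn \<lambda> = sgn \<alpha> and gives
  the sign of u'. The Riccati variable z = |u'/u|^{p-2} u'/u solves
  z' = -\<lambda> - (w'/w) z - (p-1) |z|^{p/(p-1)}, and at a critical point of z this right-hand side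
  has derivative -(ln w)'' z. Under strict log-concavity z therefore never turns back, so it is
  monotone between z(0) = \<alpha> and z(R) = 0.
  For the comparison of eigenvalues, Q = w z - \<epsilon> t is a nonnegative Picone weight on a
  shorter interval [0,b]; integrating (Q |v|^p)' and bounding it pointwise by Young's inequality
  shows that every admissible v on [0,b] has Rayleigh quotient at least \<lambda> + \<epsilon> / max w.\<close>

section \<open>Signed powers\<close>

lemma spow_pos: "0 < x \<Longrightarrow> spow p x = x powr (p - 1)"
  by (simp add: spow_def)

lemma spow_nonneg_eq: "0 \<le> x \<Longrightarrow> spow p x = x powr (p - 1)"
  by (cases "x = 0") (auto simp: spow_def)

lemma spow_nonpos_eq: "x \<le> 0 \<Longrightarrow> spow p x = - ((- x) powr (p - 1))"
  by (cases "x = 0") (auto simp: spow_def)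

lemma spow_gt0_iff: "spow p x > 0 \<longleftrightarrow> x > 0"
  by (auto simp: spow_def sgn_if)

lemma spow_lt0_iff: "spow p x < 0 \<longleftrightarrow> x < 0"
  by (auto simp: spow_def sgn_if)

lemma abs_spow: "\<bar>spow p x\<bar> = \<bar>x\<bar> powr (p - 1)"
  by (simp add: spow_def abs_mult sgn_if)

lemma spow_mult_self: "spow p x * x = \<bar>x\<bar> powr p"
proof (cases "x = 0")
  case False
  have "spow p x * x = \<bar>x\<bar> powr 1 * \<bar>x\<bar> powr (p - 1)"
    using False by (auto simp: spow_def sgn_if)
  also have "\<dots> = \<bar>x\<bar> powr p"
    using powr_add[of "\<bar>x\<bar>" 1 "p - 1"] by simp
  finally show ?thesis .
qed (simp add: spow_def)

lemma spow_divide_pos: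
  assumes "0 < y"
  shows "spow p (x / y) = spow p x * y powr (1 - p)"
proof -
  have "y powr (1 - p) = 1 / y powr (p - 1)"
    using powr_minus_divide[of y "p - 1"] by simp
  then show ?thesis
    using assms by (simp add: spow_def sgn_divide abs_divide powr_divide)
qed

lemma spow_strict_mono:
  assumes "1 < p"
  shows "strict_mono (spow p)"
proof (rule strict_monoI)
  fix x y :: real assume "x < y"
  show "spow p x < spow p y"
  proof (cases "0 \<le> x")
    case True
    then show ?thesis
      using \<open>x < y\<close> assms by (simp add: spow_nonneg_eq powr_less_mono2)
  next
    case False
    show ?thesis
    proof (cases "y \<le> 0")
      case True
      then show ?thesis
        using \<open>x < y\<close> assms by (simp add: spow_nonpos_eq powr_less_mono2)
    qed (use False spow_gt0_iff[of p y] spow_lt0_iff[of p x] in auto)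
  qed
qed

lemma continuous_on_spow:
  assumes "1 < p"
  shows "continuous_on UNIV (spow p)"
proof -
  have "continuous_on {0..} (\<lambda>x::real. x powr (p - 1))"
    by (rule continuous_on_powr') (use assms in \<open>auto intro: continuous_intros\<close>)
  then have "continuous_on {0..} (spow p)"
    by (rule continuous_on_eq) (simp add: spow_nonneg_eq)
  moreover have "continuous_on {..0} (\<lambda>x::real. - ((- x) powr (p - 1)))"
    by (intro continuous_on_minus continuous_on_powr') (use assms in \<open>auto intro: continuous_intros\<close>)
  then have "continuous_on {..0} (spow p)"
    by (rule continuous_on_eq) (simp add: spow_nonpos_eq)
  ultimately have "continuous_on ({0..} \<union> {..0}) (spow p)"
    by (intro continuous_on_closed_Un) auto
  moreover have "{0..} \<union> {..0} = (UNIV :: real set)" by auto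
  ultimately show ?thesis by simp
qed

lemma abs_powr_has_real_derivative:
  assumes "x \<noteq> 0"
  shows "((\<lambda>y. \<bar>y\<bar> powr q) has_real_derivative q * sgn x * \<bar>x\<bar> powr (q - 1)) (at x)"
proof (cases "x > 0")
  case True
  have "((\<lambda>y. y powr q) has_real_derivative q * sgn x * \<bar>x\<bar> powr (q - 1)) (at x)"
    using has_real_derivative_powr[OF True] True by simp
  then show ?thesis
    by (rule has_field_derivative_transform_within_open[where S = "{0<..}"]) (use True in auto)
next
  case False
  with assms have "x < 0" by simp
  have "((\<lambda>y. y powr q) has_real_derivative q * (- x) powr (q - 1)) (at (- x))"
    by (rule has_real_derivative_powr) (use \<open>x < 0\<close> in auto)
  from DERIV_chain2[OF this DERIV_minus[OF DERIV_ident]]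
  have "((\<lambda>y. (- y) powr q) has_real_derivative q * sgn x * \<bar>x\<bar> powr (q - 1)) (at x)"
    using \<open>x < 0\<close> by simp
  then show ?thesis
    by (rule has_field_derivative_transform_within_open[where S = "{..<0}"]) (use \<open>x < 0\<close> in auto)
qed

lemma powr_tangent_le:
  fixes a s :: real
  assumes "1 < p" "0 \<le> a" "0 \<le> s"
  shows "p * s powr (p - 1) * a \<le> a powr p + (p - 1) * s powr p"
proof -
  define q where "q = p / (p - 1)"
  have "1 < q" "1 / p + 1 / q = 1"
    using assms(1) by (auto simp: q_def field_simps)
  from Youngs_inequality[OF assms(1) this assms(2)]
  have "a * s powr (p - 1) \<le> a powr p / p + (s powr (p - 1)) powr q / q"
    by simp
  also have "(s powr (p - 1)) powr q = s powr p"
    using assms(1) by (simp add: powr_powr q_def)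
  finally have "p * (a * s powr (p - 1)) \<le> p * (a powr p / p + s powr p / q)"
    using assms(1) by simp
  also have "\<dots> = a powr p + (p - 1) * s powr p"
    using assms(1) by (simp add: q_def field_simps)
  finally show ?thesis by (simp add: algebra_simps)
qed

lemma abs_powr_diff_le:
  assumes "1 < p"
  shows "\<bar>y\<bar> powr p - \<bar>x\<bar> powr p \<le> p * spow p y * (y - x)"
proof -
  have "spow p y * x \<le> \<bar>y\<bar> powr (p - 1) * \<bar>x\<bar>"
    using abs_ge_self[of "spow p y * x"] by (simp add: abs_mult abs_spow)
  then have "p * (spow p y * x) \<le> \<bar>x\<bar> powr p + (p - 1) * \<bar>y\<bar> powr p"
    using powr_tangent_le[OF assms, of "\<bar>x\<bar>" "\<bar>y\<bar>"] assms
    by (smt (verit) mult.assoc mult.commute mult_left_mono)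
  moreover have "p * spow p y * (y - x) = p * (spow p y * y) - p * (spow p y * x)"
    by (simp add: algebra_simps)
  ultimately show ?thesis
    using spow_mult_self[of p y] by (simp add: algebra_simps)
qed

text \<open>The product rule for spow p u' * u powr (1 - p) after substituting the equation for
  (spow p u')'; the last term is the derivative of u powr (1 - p).\<close>
lemma riccati_identity:
  fixes a b c lam :: real
  assumes "0 < b" "1 < p"
  shows "(- lam * spow p b - c * spow p a) * b powr (1 - p)
      + (1 - p) * b powr (1 - p - 1) * a * spow p a
    = - lam - c * (spow p a * b powr (1 - p))
      - (p - 1) * \<bar>spow p a * b powr (1 - p)\<bar> powr (p / (p - 1))"
proof -
  have "spow p b * b powr (1 - p) = 1"
    using assms(1) by (simp add: spow_pos flip: powr_add)
  then have A: "(- lam * spow p b - c * spow p a) * b powr (1 - p)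
      = - lam - c * (spow p a * b powr (1 - p))"
    by (simp add: algebra_simps)
  have "(1 - p) * b powr (1 - p - 1) * a * spow p a = (1 - p) * b powr (- p) * (spow p a * a)"
    by (simp add: algebra_simps)
  also have "\<dots> = (1 - p) * b powr (- p) * \<bar>a\<bar> powr p"
    by (simp only: spow_mult_self)
  finally have B: "(1 - p) * b powr (1 - p - 1) * a * spow p a = - (p - 1) * (\<bar>a\<bar> powr p * b powr (- p))"
    by (simp add: algebra_simps)
  have "(p - 1) * (p / (p - 1)) = p" "(1 - p) * (p / (p - 1)) = - p"
    using assms(2) by (auto simp: field_simps)
  then have "\<bar>spow p a * b powr (1 - p)\<bar> powr (p / (p - 1)) = \<bar>a\<bar> powr p * b powr (- p)"
    by (simp add: abs_mult abs_spow powr_mult powr_powr)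
  then show ?thesis
    by (simp only: A B)
qed

section \<open>A one-sided maximum principle\<close>

lemma interior_max_of_positive_derivative:
  fixes f :: "real \<Rightarrow> real"
  assumes "t0 < b" "continuous_on {t0..b} f" "(f has_real_derivative D) (at t0)" "0 < D"
    and "f b < f t0"
  obtains s where "t0 < s" "s < b" "\<forall>y\<in>{t0..b}. f y \<le> f s"
proof -
  obtain d where d: "d > 0" "\<forall>h>0. h < d \<longrightarrow> f t0 < f (t0 + h)"
    using DERIV_pos_inc_right[OF assms(3,4)] by blast
  obtain s where s: "s \<in> {t0..b}" "\<forall>y\<in>{t0..b}. f y \<le> f s"
    using continuous_attains_sup[OF compact_Icc _ assms(2)] assms(1) by (metis atLeastatMost_empty_iff2 order_less_le)
  define h0 where "h0 = min d (b - t0) / 2"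
  have "h0 > 0" "h0 < d" "t0 + h0 \<le> b"
    using d(1) assms(1) unfolding h0_def by (auto simp: min_def field_simps)
  then have "f t0 < f (t0 + h0)"
    using d(2) by blast
  also have "\<dots> \<le> f s"
    using s(2) \<open>h0 > 0\<close> \<open>t0 + h0 \<le> b\<close> by simp
  finally have "s \<noteq> t0" "s \<noteq> b"
    using assms(5) by auto
  then have "t0 < s" "s < b"
    using s(1) by auto
  then show ?thesis
    using that s(2) by blast
qed

lemma derivative_nonpos_of_left_negative_zeros:
  fixes f f' :: "real \<Rightarrow> real"
  assumes "a < b" and cont: "continuous_on {a..b} f"
    and deriv: "\<And>t. a < t \<Longrightarrow> t < b \<Longrightarrow> (f has_real_derivative f' t) (at t)"
    and above_end: "\<And>t. a < t \<Longrightarrow> t < b \<Longrightarrow> f b < f t"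
    and zeros: "\<And>t. a < t \<Longrightarrow> t < b \<Longrightarrow> f' t = 0 \<Longrightarrow> \<exists>d>0. \<forall>h>0. h < d \<longrightarrow> f' (t - h) < 0"
    and t0: "a < t0" "t0 < b"
  shows "f' t0 \<le> 0"
proof (rule ccontr)
  assume "\<not> f' t0 \<le> 0"
  moreover have "continuous_on {t0..b} f"
    using cont by (rule continuous_on_subset) (use t0 in auto)
  \<comment> \<open>f rises right after t0 but ends below f t0\<close>
  ultimately obtain s where s: "t0 < s" "s < b" "\<forall>y\<in>{t0..b}. f y \<le> f s"
    using interior_max_of_positive_derivative[OF t0(2) _ deriv[OF t0]] above_end[OF t0] by auto
  then have st: "t0 < s" "s < b" "a < s"
    using t0 by auto
  have "f' s = 0"
  proof (rule DERIV_local_max[OF deriv[OF st(3,2)]])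
    show "0 < min (s - t0) (b - s)" using st by auto
    show "\<forall>y. \<bar>s - y\<bar> < min (s - t0) (b - s) \<longrightarrow> f y \<le> f s"
      using s(3) by (auto simp: abs_if)
  qed
  then obtain d' where d': "d' > 0" "\<forall>h>0. h < d' \<longrightarrow> f' (s - h) < 0"
    using zeros[OF st(3,2)] by blast
  define h where "h = min d' (s - t0) / 2"
  have h: "h > 0" "h < d'" "t0 < s - h"
    using d'(1) st unfolding h_def by (auto simp: min_def field_simps)
  \<comment> \<open>f' < 0 just left of the maximum s forces f (s - h) > f s\<close>
  have "f s < f (s - h)"
  proof (rule DERIV_neg_imp_decreasing_open[where f = f and a = "s - h" and b = s])
    show "s - h < s"
      using h by simp
    show "\<exists>y. (f has_real_derivative y) (at x) \<and> y < 0" if "s - h < x" "x < s" for x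
      using deriv[of x] d'(2)[rule_format, of "s - x"] that h t0 st by auto
    show "continuous_on {s - h..s} f"
      using cont by (rule continuous_on_subset) (use h t0 st in auto)
  qed
  moreover have "s - h \<in> {t0..b}"
    using h st by auto
  ultimately show False
    using s(3) by fastforce
qed

section \<open>Picone's inequality for absolutely continuous functions\<close>

lemma increment_ge_of_local_increment_ge:
  fixes \<Phi> M :: "real \<Rightarrow> real"
  assumes "\<delta> > 0"
    and local: "\<And>x y. a \<le> x \<Longrightarrow> x \<le> y \<Longrightarrow> y \<le> b \<Longrightarrow> y - x < \<delta> \<Longrightarrow> c * (M y - M x) \<le> \<Phi> y - \<Phi> x"
    and "a \<le> x" "x \<le> y" "y \<le> b"
  shows "c * (M y - M x) \<le> \<Phi> y - \<Phi> x"
proof -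
  have "\<forall>x y. a \<le> x \<longrightarrow> x \<le> y \<longrightarrow> y \<le> b \<longrightarrow> y - x \<le> real n * (\<delta> / 2)
      \<longrightarrow> c * (M y - M x) \<le> \<Phi> y - \<Phi> x" for n
  proof (induction n)
    case 0
    then show ?case by auto
  next
    case (Suc n)
    show ?case
    proof (intro allI impI)
      fix x y assume xy: "a \<le> x" "x \<le> y" "y \<le> b" "y - x \<le> real (Suc n) * (\<delta> / 2)"
      show "c * (M y - M x) \<le> \<Phi> y - \<Phi> x"
      proof (cases "y - x < \<delta>")
        case False
        define m where "m = x + \<delta> / 2"
        have m: "a \<le> m" "x \<le> m" "m \<le> y" "y - m \<le> real n * (\<delta> / 2)"
          using xy False \<open>\<delta> > 0\<close> by (auto simp: m_def algebra_simps)
        have "c * (M m - M x) \<le> \<Phi> m - \<Phi> x"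
          using local[of x m] xy m \<open>\<delta> > 0\<close> by (simp add: m_def)
        moreover have "c * (M y - M m) \<le> \<Phi> y - \<Phi> m"
          using Suc.IH m xy(3) by blast
        ultimately show ?thesis
          by (simp add: algebra_simps)
      qed (use local xy in blast)
    qed
  qed
  moreover obtain n where "(y - x) / (\<delta> / 2) \<le> real n"
    using real_arch_simple by blast
  then have "y - x \<le> real n * (\<delta> / 2)"
    using \<open>\<delta> > 0\<close> by (simp add: field_simps)
  ultimately show ?thesis
    using assms(3-5) by blast
qed

lemma le_of_local_increment_ge:
  fixes \<Phi> M :: "real \<Rightarrow> real"
  assumes "a \<le> b" "M a \<le> M b"
    and local: "\<And>e. e > 0 \<Longrightarrow> \<exists>\<delta>>0. \<forall>x y. a \<le> x \<longrightarrow> x \<le> y \<longrightarrow> y \<le> b \<longrightarrow> y - x < \<delta> \<longrightarrow>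
      - e * (M y - M x) \<le> \<Phi> y - \<Phi> x"
  shows "\<Phi> a \<le> \<Phi> b"
proof (rule field_le_epsilon)
  fix e :: real assume "e > 0"
  define e' where "e' = e / (M b - M a + 1)"
  have "e' > 0"
    using \<open>e > 0\<close> assms(2) by (simp add: e'_def)
  then obtain \<delta> where "\<delta> > 0" "\<forall>x y. a \<le> x \<longrightarrow> x \<le> y \<longrightarrow> y \<le> b \<longrightarrow> y - x < \<delta> \<longrightarrow>
      - e' * (M y - M x) \<le> \<Phi> y - \<Phi> x"
    using local by blast
  then have "- e' * (M b - M a) \<le> \<Phi> b - \<Phi> a"
    using increment_ge_of_local_increment_ge[of \<delta> a b "- e'" M \<Phi> a b] assms(1) by auto
  moreover have "e' * (M b - M a) \<le> e"
    using \<open>e > 0\<close> assms(2) by (simp add: e'_def field_simps)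
  ultimately show "\<Phi> a \<le> \<Phi> b + e"
    by linarith
qed

lemma uniform_continuity_mult_Icc:
  fixes f g :: "real \<Rightarrow> real"
  assumes f: "continuous_on {a..b} f" and g: "continuous_on {a..b} g" and "e > 0"
  shows "\<exists>d>0. \<forall>s\<in>{a..b}. \<forall>s'\<in>{a..b}. \<forall>t\<in>{a..b}. \<forall>t'\<in>{a..b}.
    \<bar>s - s'\<bar> < d \<longrightarrow> \<bar>t - t'\<bar> < d \<longrightarrow> \<bar>f s * g t - f s' * g t'\<bar> \<le> e"
proof -
  obtain Bf where Bf: "\<forall>s\<in>{a..b}. \<bar>f s\<bar> \<le> Bf"
    using compact_imp_bounded[OF compact_continuous_image[OF f compact_Icc]]
    unfolding bounded_iff by auto
  obtain Bg where Bg: "\<forall>t\<in>{a..b}. \<bar>g t\<bar> \<le> Bg"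
    using compact_imp_bounded[OF compact_continuous_image[OF g compact_Icc]]
    unfolding bounded_iff by auto
  define \<eta> where "\<eta> = e / (\<bar>Bf\<bar> + \<bar>Bg\<bar> + 1)"
  have "\<eta> > 0" using \<open>e > 0\<close> by (simp add: \<eta>_def add_pos_nonneg)
  obtain df where df: "df > 0" "\<And>s s'. s \<in> {a..b} \<Longrightarrow> s' \<in> {a..b} \<Longrightarrow> dist s' s < df
      \<Longrightarrow> dist (f s') (f s) < \<eta>"
    using uniformly_continuous_onE[OF compact_uniformly_continuous[OF f compact_Icc] \<open>\<eta> > 0\<close>] by blast
  obtain dg where dg: "dg > 0" "\<And>t t'. t \<in> {a..b} \<Longrightarrow> t' \<in> {a..b} \<Longrightarrow> dist t' t < dg
      \<Longrightarrow> dist (g t') (g t) < \<eta>"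
    using uniformly_continuous_onE[OF compact_uniformly_continuous[OF g compact_Icc] \<open>\<eta> > 0\<close>] by blast
  show ?thesis
  proof (intro exI[of _ "min df dg"] conjI ballI impI)
    fix s s' t t' assume st: "s \<in> {a..b}" "s' \<in> {a..b}" "t \<in> {a..b}" "t' \<in> {a..b}"
      "\<bar>s - s'\<bar> < min df dg" "\<bar>t - t'\<bar> < min df dg"
    have "\<bar>f s - f s'\<bar> \<le> \<eta>"
      using df(2)[of s' s] st by (simp add: dist_real_def abs_minus_commute)
    moreover have "\<bar>g t - g t'\<bar> \<le> \<eta>"
      using dg(2)[of t' t] st by (simp add: dist_real_def abs_minus_commute)
    moreover have "\<bar>g t\<bar> \<le> \<bar>Bg\<bar>" "\<bar>f s'\<bar> \<le> \<bar>Bf\<bar>"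
      using Bf Bg st by fastforce+
    ultimately have "\<bar>f s - f s'\<bar> * \<bar>g t\<bar> + \<bar>f s'\<bar> * \<bar>g t - g t'\<bar> \<le> \<eta> * \<bar>Bg\<bar> + \<bar>Bf\<bar> * \<eta>"
      by (intro add_mono mult_mono) auto
    also have "\<dots> \<le> \<eta> * (\<bar>Bf\<bar> + \<bar>Bg\<bar> + 1)"
      using \<open>\<eta> > 0\<close> by (simp add: algebra_simps)
    also have "\<dots> = e"
      by (simp add: \<eta>_def add_pos_nonneg)
    moreover have "f s * g t - f s' * g t' = (f s - f s') * g t + f s' * (g t - g t')"
      by (simp add: algebra_simps)
    moreover have "\<bar>(f s - f s') * g t + f s' * (g t - g t')\<bar>
        \<le> \<bar>f s - f s'\<bar> * \<bar>g t\<bar> + \<bar>f s'\<bar> * \<bar>g t - g t'\<bar>"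
      by (metis abs_mult abs_triangle_ineq)
    ultimately show "\<bar>f s * g t - f s' * g t'\<bar> \<le> e"
      by linarith
  qed (use df dg in auto)
qed

lemma integral_ge_of_near_multiple:
  fixes f h :: "real \<Rightarrow> real"
  assumes f: "f integrable_on {x..y}" and h: "h absolutely_integrable_on {x..y}"
    and near: "\<And>t. t \<in> {x..y} \<Longrightarrow> \<bar>f t - c * h t\<bar> \<le> \<eta> * \<bar>h t\<bar>"
  shows "c * integral {x..y} h - \<eta> * integral {x..y} (\<lambda>t. \<bar>h t\<bar>) \<le> integral {x..y} f"
proof -
  have hi: "h integrable_on {x..y}" "(\<lambda>t. \<bar>h t\<bar>) integrable_on {x..y}"
    using h unfolding absolutely_integrable_on_def by auto
  have "norm (integral {x..y} (\<lambda>t. f t - c * h t)) \<le> integral {x..y} (\<lambda>t. \<eta> * \<bar>h t\<bar>)"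
    using near by (intro integral_norm_bound_integral integrable_diff f integrable_on_mult_right hi) auto
  moreover have "integral {x..y} (\<lambda>t. f t - c * h t) = integral {x..y} f - c * integral {x..y} h"
    using f hi by (simp add: integral_diff integrable_on_mult_right)
  ultimately show ?thesis
    by (simp add: abs_le_iff)
qed

lemma weighted_abs_powr_increment_le:
  fixes Q Q' :: "real \<Rightarrow> real"
  assumes "1 < p" "x \<le> y" "continuous_on {x..y} Q"
    and "\<And>t. x < t \<Longrightarrow> t < y \<Longrightarrow> (Q has_real_derivative Q' t) (at t)" and "Q x \<ge> 0"
  shows "\<exists>\<xi>\<in>{x..y}. Q y * \<bar>vy\<bar> powr p - Q x * \<bar>vx\<bar> powr p
    \<le> p * Q x * spow p vy * (vy - vx) + Q' \<xi> * (y - x) * \<bar>vy\<bar> powr p"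
proof -
  obtain \<xi> where \<xi>: "\<xi> \<in> {x..y}" "Q y - Q x = Q' \<xi> * (y - x)"
  proof (cases "x = y")
    case False
    then have "x < y" using assms(2) by simp
    moreover have "Q differentiable at t" if "x < t" "t < y" for t
      using assms(4)[OF that] real_differentiable_def by blast
    ultimately obtain l \<xi> where \<xi>: "x < \<xi>" "\<xi> < y" "(Q has_real_derivative l) (at \<xi>)"
      "Q y - Q x = (y - x) * l"
      using MVT[of x y Q] assms(3) by blast
    then have "l = Q' \<xi>"
      using DERIV_unique assms(4) by blast
    then show ?thesis
      using that[of \<xi>] \<xi> by (simp add: mult.commute)
  qed (use that in auto)
  have "Q x * (\<bar>vy\<bar> powr p - \<bar>vx\<bar> powr p) \<le> p * Q x * spow p vy * (vy - vx)"
    using mult_left_mono[OF abs_powr_diff_le[OF assms(1)] assms(5)] by (simp add: ac_simps)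
  moreover have "Q y * \<bar>vy\<bar> powr p - Q x * \<bar>vx\<bar> powr p
      = Q x * (\<bar>vy\<bar> powr p - \<bar>vx\<bar> powr p) + (Q y - Q x) * \<bar>vy\<bar> powr p"
    by (simp add: algebra_simps)
  ultimately have "Q y * \<bar>vy\<bar> powr p - Q x * \<bar>vx\<bar> powr p
      \<le> p * Q x * spow p vy * (vy - vx) + Q' \<xi> * (y - x) * \<bar>vy\<bar> powr p"
    unfolding \<xi>(2) by linarith
  then show ?thesis
    using \<xi>(1) by blast
qed

lemma integral_Icc_split:
  fixes f :: "real \<Rightarrow> real"
  assumes "f integrable_on {a..b}" "a \<le> x" "x \<le> y" "y \<le> b"
  shows "integral {a..y} f = integral {a..x} f + integral {x..y} f"
proof -
  have "f integrable_on {a..y}"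
    by (rule integrable_on_subinterval[OF assms(1)]) (use assms in auto)
  from Henstock_Kurzweil_Integration.integral_combine[OF assms(2,3) this]
  show ?thesis by simp
qed

lemma absolutely_integrable_continuous_mult:
  fixes f h :: "real \<Rightarrow> real"
  assumes "continuous_on {a..b} f" "h absolutely_integrable_on {a..b}"
  shows "(\<lambda>t. f t * h t) absolutely_integrable_on {a..b}"
  by (intro absolutely_integrable_bounded_measurable_product_real assms
      continuous_imp_measurable_on_sets_lebesgue compact_imp_bounded
      compact_continuous_image[OF assms(1)]) auto

locale picone_data =
  fixes p a b :: real and Q Q' v g :: "real \<Rightarrow> real"
  assumes p_gt1: "1 < p" and a_le_b: "a \<le> b"
    and continuous_Q: "continuous_on {a..b} Q" and continuous_Q': "continuous_on {a..b} Q'"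
    and Q_has_derivative: "\<And>t. a < t \<Longrightarrow> t < b \<Longrightarrow> (Q has_real_derivative Q' t) (at t)"
    and Q_nonneg: "\<And>t. t \<in> {a..b} \<Longrightarrow> 0 \<le> Q t"
    and g_integrable: "g absolutely_integrable_on {a..b}"
    and v_eq: "\<And>x. x \<in> {a..b} \<Longrightarrow> v x = v a + integral {a..x} g"
begin

text \<open>The derivative of Q |v|^p wherever v is differentiable with v' = g.\<close>
definition integrand :: "real \<Rightarrow> real" where
  "integrand t = p * Q t * spow p (v t) * g t + Q' t * \<bar>v t\<bar> powr p"

lemma g_integrable_on: "g integrable_on {a..b}" "(\<lambda>t. \<bar>g t\<bar>) integrable_on {a..b}"
  using g_integrable unfolding absolutely_integrable_on_def by auto

lemma continuous_on_v: "continuous_on {a..b} v"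
  by (rule continuous_on_eq[OF _ v_eq[symmetric]])
     (intro continuous_intros indefinite_integral_continuous_1 g_integrable_on)

lemma continuous_on_spow_v: "continuous_on {a..b} (\<lambda>t. spow p (v t))"
  by (rule continuous_on_compose2[OF continuous_on_spow[OF p_gt1] continuous_on_v]) auto

lemma continuous_on_abs_powr_v: "continuous_on {a..b} (\<lambda>t. \<bar>v t\<bar> powr p)"
  by (rule continuous_on_powr') (use p_gt1 in \<open>auto intro: continuous_intros continuous_on_v\<close>)

lemma integrable_integrand: "integrand integrable_on {a..b}"
proof -
  have "(\<lambda>t. (p * Q t * spow p (v t)) * g t) integrable_on {a..b}"
    by (intro set_lebesgue_integral_eq_integral(1) absolutely_integrable_continuous_mult g_integrable
        continuous_intros continuous_Q continuous_on_spow_v)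
  moreover have "(\<lambda>t. Q' t * \<bar>v t\<bar> powr p) integrable_on {a..b}"
    by (intro integrable_continuous_interval continuous_intros continuous_Q' continuous_on_abs_powr_v)
  ultimately show ?thesis
    unfolding integrand_def[abs_def] by (rule integrable_add)
qed

lemma integral_g:
  assumes "a \<le> x" "x \<le> y" "y \<le> b"
  shows "integral {x..y} g = v y - v x"
  using v_eq[of x] v_eq[of y] integral_Icc_split[OF g_integrable_on(1) assms] assms by simp

lemma local_oscillation_le:
  assumes "e > 0"
  shows "\<exists>\<delta>>0. \<forall>x y. a \<le> x \<longrightarrow> x \<le> y \<longrightarrow> y \<le> b \<longrightarrow> y - x < \<delta> \<longrightarrow> (\<forall>t\<in>{x..y}. \<forall>\<xi>\<in>{x..y}.
    \<bar>Q t * spow p (v t) - Q x * spow p (v y)\<bar> \<le> e \<and>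
    \<bar>Q' t * \<bar>v t\<bar> powr p - Q' \<xi> * \<bar>v y\<bar> powr p\<bar> \<le> e)"
proof -
  obtain d1 where d1: "d1 > 0" "\<forall>s\<in>{a..b}. \<forall>s'\<in>{a..b}. \<forall>t\<in>{a..b}. \<forall>t'\<in>{a..b}.
      \<bar>s - s'\<bar> < d1 \<longrightarrow> \<bar>t - t'\<bar> < d1 \<longrightarrow> \<bar>Q s * spow p (v t) - Q s' * spow p (v t')\<bar> \<le> e"
    using uniform_continuity_mult_Icc[OF continuous_Q continuous_on_spow_v assms] by blast
  obtain d2 where d2: "d2 > 0" "\<forall>s\<in>{a..b}. \<forall>s'\<in>{a..b}. \<forall>t\<in>{a..b}. \<forall>t'\<in>{a..b}.
      \<bar>s - s'\<bar> < d2 \<longrightarrow> \<bar>t - t'\<bar> < d2 \<longrightarrow> \<bar>Q' s * \<bar>v t\<bar> powr p - Q' s' * \<bar>v t'\<bar> powr p\<bar> \<le> e"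
    using uniform_continuity_mult_Icc[OF continuous_Q' continuous_on_abs_powr_v assms] by blast
  show ?thesis
  proof (intro exI[of _ "min d1 d2"] conjI allI impI ballI)
    fix x y t \<xi> assume xy: "a \<le> x" "x \<le> y" "y \<le> b" "y - x < min d1 d2"
      and t: "t \<in> {x..y}" and \<xi>: "\<xi> \<in> {x..y}"
    have close: "\<bar>r - r'\<bar> < d1" "\<bar>r - r'\<bar> < d2" if "r \<in> {x..y}" "r' \<in> {x..y}" for r r'
      using that xy by (auto simp: abs_if)
    have x: "x \<in> {x..y}" and y: "y \<in> {x..y}"
      using xy by auto
    have ab: "x \<in> {a..b}" "y \<in> {a..b}" "t \<in> {a..b}" "\<xi> \<in> {a..b}"
      using xy t \<xi> by auto
    show "\<bar>Q t * spow p (v t) - Q x * spow p (v y)\<bar> \<le> e"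
      using d1(2)[rule_format, OF ab(3,1,3,2) close(1)[OF t x] close(1)[OF t y]] .
    show "\<bar>Q' t * \<bar>v t\<bar> powr p - Q' \<xi> * \<bar>v y\<bar> powr p\<bar> \<le> e"
      using d2(2)[rule_format, OF ab(3,4,3,2) close(2)[OF t \<xi>] close(2)[OF t y]] .
  qed (use d1 d2 in auto)
qed

lemma integral_integrand_ge:
  assumes xy: "a \<le> x" "x \<le> y" "y \<le> b" and "\<xi> \<in> {x..y}"
    and osc1: "\<And>t. t \<in> {x..y} \<Longrightarrow> \<bar>Q t * spow p (v t) - Q x * spow p (v y)\<bar> \<le> \<eta>"
    and osc2: "\<And>t. t \<in> {x..y} \<Longrightarrow> \<bar>Q' t * \<bar>v t\<bar> powr p - Q' \<xi> * \<bar>v y\<bar> powr p\<bar> \<le> \<eta>"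
  shows "p * Q x * spow p (v y) * (v y - v x) + Q' \<xi> * (y - x) * \<bar>v y\<bar> powr p
    - \<eta> * (p * integral {x..y} (\<lambda>t. \<bar>g t\<bar>) + (y - x)) \<le> integral {x..y} integrand"
proof -
  have sub: "{x..y} \<subseteq> {a..b}" using xy by auto
  have gi: "g absolutely_integrable_on {x..y}"
    by (rule set_integrable_subset[OF g_integrable]) (use sub in auto)
  have i1: "(\<lambda>t. p * Q t * spow p (v t) * g t) integrable_on {x..y}"
    using set_lebesgue_integral_eq_integral(1)[OF absolutely_integrable_continuous_mult[OF _ gi,
        of "\<lambda>t. p * Q t * spow p (v t)"]] continuous_on_subset[OF continuous_Q sub]
      continuous_on_subset[OF continuous_on_spow_v sub]
    by (simp add: continuous_intros)
  have i2: "(\<lambda>t. Q' t * \<bar>v t\<bar> powr p) integrable_on {x..y}"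
    by (intro integrable_continuous_interval continuous_intros continuous_on_subset[OF continuous_Q' sub]
        continuous_on_subset[OF continuous_on_abs_powr_v sub])
  have "p * Q x * spow p (v y) * integral {x..y} g - (p * \<eta>) * integral {x..y} (\<lambda>t. \<bar>g t\<bar>)
      \<le> integral {x..y} (\<lambda>t. p * Q t * spow p (v t) * g t)"
  proof (rule integral_ge_of_near_multiple[OF i1 gi])
    fix t assume "t \<in> {x..y}"
    then have "p * \<bar>Q t * spow p (v t) - Q x * spow p (v y)\<bar> \<le> p * \<eta>"
      using osc1 p_gt1 by simp
    then have "p * \<bar>Q t * spow p (v t) - Q x * spow p (v y)\<bar> * \<bar>g t\<bar> \<le> p * \<eta> * \<bar>g t\<bar>"
      by (rule mult_right_mono) simp
    moreover have "p * Q t * spow p (v t) * g t - p * Q x * spow p (v y) * g t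
        = p * (Q t * spow p (v t) - Q x * spow p (v y)) * g t"
      by (simp add: algebra_simps)
    ultimately show "\<bar>p * Q t * spow p (v t) * g t - p * Q x * spow p (v y) * g t\<bar> \<le> p * \<eta> * \<bar>g t\<bar>"
      using p_gt1 by (simp add: abs_mult)
  qed
  then have I1: "p * Q x * spow p (v y) * (v y - v x) - \<eta> * (p * integral {x..y} (\<lambda>t. \<bar>g t\<bar>))
      \<le> integral {x..y} (\<lambda>t. p * Q t * spow p (v t) * g t)"
    by (simp add: integral_g[OF xy] mult.assoc mult.left_commute)
  have "Q' \<xi> * \<bar>v y\<bar> powr p * integral {x..y} (\<lambda>t. 1) - \<eta> * integral {x..y} (\<lambda>t. \<bar>1::real\<bar>)
      \<le> integral {x..y} (\<lambda>t. Q' t * \<bar>v t\<bar> powr p)"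
    using osc2 by (intro integral_ge_of_near_multiple[OF i2]) auto
  then have I2: "Q' \<xi> * (y - x) * \<bar>v y\<bar> powr p - \<eta> * (y - x)
      \<le> integral {x..y} (\<lambda>t. Q' t * \<bar>v t\<bar> powr p)"
    using xy by (simp add: mult.commute mult.left_commute)
  have "integral {x..y} integrand = integral {x..y} (\<lambda>t. p * Q t * spow p (v t) * g t)
      + integral {x..y} (\<lambda>t. Q' t * \<bar>v t\<bar> powr p)"
    unfolding integrand_def by (rule integral_add[OF i1 i2])
  moreover have "\<eta> * (p * integral {x..y} (\<lambda>t. \<bar>g t\<bar>) + (y - x))
      = \<eta> * (p * integral {x..y} (\<lambda>t. \<bar>g t\<bar>)) + \<eta> * (y - x)"
    by (simp add: algebra_simps)
  ultimately show ?thesis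
    using I1 I2 by linarith
qed

lemma local_increment_le:
  assumes "e > 0"
  shows "\<exists>\<delta>>0. \<forall>x y. a \<le> x \<longrightarrow> x \<le> y \<longrightarrow> y \<le> b \<longrightarrow> y - x < \<delta> \<longrightarrow>
    Q y * \<bar>v y\<bar> powr p - Q x * \<bar>v x\<bar> powr p
      \<le> integral {x..y} integrand + e * ((y - x) + integral {x..y} (\<lambda>t. \<bar>g t\<bar>))"
proof -
  obtain \<delta> where "\<delta> > 0" and osc: "\<forall>x y. a \<le> x \<longrightarrow> x \<le> y \<longrightarrow> y \<le> b \<longrightarrow> y - x < \<delta> \<longrightarrow>
      (\<forall>t\<in>{x..y}. \<forall>\<xi>\<in>{x..y}. \<bar>Q t * spow p (v t) - Q x * spow p (v y)\<bar> \<le> e / p \<and>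
        \<bar>Q' t * \<bar>v t\<bar> powr p - Q' \<xi> * \<bar>v y\<bar> powr p\<bar> \<le> e / p)"
    using local_oscillation_le[of "e / p"] assms p_gt1 by auto
  show ?thesis
  proof (intro exI[of _ \<delta>] conjI allI impI \<open>\<delta> > 0\<close>)
    fix x y assume xy: "a \<le> x" "x \<le> y" "y \<le> b" "y - x < \<delta>"
    have "continuous_on {x..y} Q"
      using continuous_Q by (rule continuous_on_subset) (use xy in auto)
    moreover have "(Q has_real_derivative Q' t) (at t)" if "x < t" "t < y" for t
      using Q_has_derivative that xy by simp
    moreover have "Q x \<ge> 0"
      using Q_nonneg xy by simp
    ultimately obtain \<xi> where \<xi>: "\<xi> \<in> {x..y}" and incr: "Q y * \<bar>v y\<bar> powr p - Q x * \<bar>v x\<bar> powr p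
        \<le> p * Q x * spow p (v y) * (v y - v x) + Q' \<xi> * (y - x) * \<bar>v y\<bar> powr p"
      using weighted_abs_powr_increment_le[OF p_gt1 xy(2)] by blast
    have osc_xy: "\<forall>t\<in>{x..y}. \<forall>\<xi>\<in>{x..y}. \<bar>Q t * spow p (v t) - Q x * spow p (v y)\<bar> \<le> e / p \<and>
        \<bar>Q' t * \<bar>v t\<bar> powr p - Q' \<xi> * \<bar>v y\<bar> powr p\<bar> \<le> e / p"
      using osc xy by blast
    have "Q y * \<bar>v y\<bar> powr p - Q x * \<bar>v x\<bar> powr p
        \<le> integral {x..y} integrand + e / p * (p * integral {x..y} (\<lambda>t. \<bar>g t\<bar>) + (y - x))"
      using incr integral_integrand_ge[OF xy(1-3) \<xi>, of "e / p"] osc_xy \<xi> by fastforce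
    moreover have "e / p * (p * integral {x..y} (\<lambda>t. \<bar>g t\<bar>) + (y - x))
        = e * integral {x..y} (\<lambda>t. \<bar>g t\<bar>) + e / p * (y - x)"
      using p_gt1 by (simp add: field_simps)
    moreover have "e / p * (y - x) \<le> e * (y - x)"
      using assms p_gt1 xy by (intro mult_right_mono) (auto simp: field_simps)
    ultimately show "Q y * \<bar>v y\<bar> powr p - Q x * \<bar>v x\<bar> powr p
        \<le> integral {x..y} integrand + e * ((y - x) + integral {x..y} (\<lambda>t. \<bar>g t\<bar>))"
      by (simp add: algebra_simps)
  qed
qed

text \<open>Q |v|^p is absolutely continuous with derivative integrand almost everywhere; the
  inequality is obtained by summing the local increment bounds over fine partitions.\<close>
lemma picone_integral_inequality:
  "Q b * \<bar>v b\<bar> powr p - Q a * \<bar>v a\<bar> powr p \<le> integral {a..b} integrand"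
proof -
  define \<Phi> where "\<Phi> x = integral {a..x} integrand - Q x * \<bar>v x\<bar> powr p" for x
  define M where "M x = x + integral {a..x} (\<lambda>t. \<bar>g t\<bar>)" for x
  have "\<Phi> a \<le> \<Phi> b"
  proof (rule le_of_local_increment_ge[OF a_le_b])
    show "M a \<le> M b"
      using a_le_b integral_nonneg[OF g_integrable_on(2)] by (simp add: M_def)
    fix e :: real assume "e > 0"
    then obtain \<delta> where "\<delta> > 0" and \<delta>: "\<forall>x y. a \<le> x \<longrightarrow> x \<le> y \<longrightarrow> y \<le> b \<longrightarrow> y - x < \<delta> \<longrightarrow>
        Q y * \<bar>v y\<bar> powr p - Q x * \<bar>v x\<bar> powr p
          \<le> integral {x..y} integrand + e * ((y - x) + integral {x..y} (\<lambda>t. \<bar>g t\<bar>))"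
      using local_increment_le by blast
    show "\<exists>\<delta>>0. \<forall>x y. a \<le> x \<longrightarrow> x \<le> y \<longrightarrow> y \<le> b \<longrightarrow> y - x < \<delta> \<longrightarrow> - e * (M y - M x) \<le> \<Phi> y - \<Phi> x"
    proof (intro exI[of _ \<delta>] conjI allI impI \<open>\<delta> > 0\<close>)
      fix x y assume xy: "a \<le> x" "x \<le> y" "y \<le> b" "y - x < \<delta>"
      then show "- e * (M y - M x) \<le> \<Phi> y - \<Phi> x"
        using \<delta>[rule_format, OF xy] integral_Icc_split[OF integrable_integrand xy(1-3)]
          integral_Icc_split[OF g_integrable_on(2) xy(1-3)]
        by (simp add: \<Phi>_def M_def algebra_simps)
    qed
  qed
  then show ?thesis
    by (simp add: \<Phi>_def)
qed

end

lemma set_integrable_mult_continuous_Icc: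
  fixes f h :: "real \<Rightarrow> real"
  assumes f: "set_integrable lborel {a..b} f" and h: "continuous_on {a..b} h"
  shows "set_integrable lborel {a..b} (\<lambda>t. f t * h t)"
proof -
  obtain B where B: "\<forall>t\<in>{a..b}. \<bar>h t\<bar> \<le> B"
    using compact_imp_bounded[OF compact_continuous_image[OF h compact_Icc]]
    unfolding bounded_iff by auto
  have fi: "integrable lborel (\<lambda>t. indicator {a..b} t *\<^sub>R f t)"
    using f by (simp add: set_integrable_def)
  have "(\<lambda>t. indicator {a..b} t *\<^sub>R (f t * h t))
      = (\<lambda>t. (indicator {a..b} t *\<^sub>R f t) * (indicator {a..b} t *\<^sub>R h t))"
    by (auto simp: fun_eq_iff indicator_def)
  moreover have "(\<lambda>t. indicator {a..b} t *\<^sub>R h t) \<in> borel_measurable borel"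
    by (rule borel_measurable_continuous_on_indicator[OF _ h]) simp
  ultimately have "(\<lambda>t. indicator {a..b} t *\<^sub>R (f t * h t)) \<in> borel_measurable lborel"
    using borel_measurable_integrable[OF fi] by (simp add: borel_measurable_times)
  moreover have "norm (indicator {a..b} t *\<^sub>R (f t * h t)) \<le> norm (B * (indicator {a..b} t *\<^sub>R f t))" for t
  proof (cases "t \<in> {a..b}")
    case True
    then have "\<bar>f t\<bar> * \<bar>h t\<bar> \<le> \<bar>f t\<bar> * \<bar>B\<bar>"
      using B by (intro mult_left_mono) fastforce+
    then show ?thesis
      using True by (simp add: abs_mult mult.commute)
  qed simp
  ultimately show ?thesis
    unfolding set_integrable_def
    by (intro Bochner_Integration.integrable_bound[OF integrable_mult_right[OF fi, of B]] AE_I2)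
qed

lemma W1p_pair_integral_representation:
  assumes "W1p_pair p b v g"
  shows "g absolutely_integrable_on {0..b}"
    and "(\<lambda>t. \<bar>g t\<bar> powr p) integrable_on {0..b}"
    and "\<And>x. x \<in> {0..b} \<Longrightarrow> v x = v 0 + integral {0..x} g"
proof -
  have g: "set_integrable lborel {0..b} g"
    using assms unfolding W1p_pair_def by blast
  then show "g absolutely_integrable_on {0..b}"
    using set_borel_integral_eq_integral(1)[OF g] set_borel_integral_eq_integral(1)[OF set_integrable_abs[OF g]]
    by (simp add: absolutely_integrable_on_def)
  show "(\<lambda>t. \<bar>g t\<bar> powr p) integrable_on {0..b}"
    using assms unfolding W1p_pair_def by (blast intro: set_borel_integral_eq_integral(1))
  fix x assume x: "x \<in> {0..b}"
  then have "(LBINT t:{0..x}. g t) = integral {0..x} g"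
    by (intro set_borel_integral_eq_integral(2) set_integrable_subset[OF g]) auto
  moreover have "v x = v 0 + (LBINT t:{0..x}. g t)"
    using assms x unfolding W1p_pair_def by blast
  ultimately show "v x = v 0 + integral {0..x} g"
    by simp
qed

lemma le_lam_bar:
  fixes w :: "real \<Rightarrow> real"
  assumes "0 < p" "0 < b" and w: "continuous_on {0..b} w" "\<And>t. t \<in> {0..b} \<Longrightarrow> 0 < w t"
    and lower: "\<And>v g. W1p_pair p b v g \<Longrightarrow> (LBINT t:{0..b}. \<bar>v t\<bar> powr p * w t) = 1
      \<Longrightarrow> c \<le> (LBINT t:{0..b}. \<bar>g t\<bar> powr p * w t) + \<alpha> * \<bar>v 0\<bar> powr p"
  shows "c \<le> lam_bar p b w \<alpha>"
proof -
  have wI: "set_integrable lborel {0..b} w"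
    unfolding set_integrable_def by (rule borel_integrable_compact[OF compact_Icc w(1)])
  obtain m where m: "m \<in> {0..b}" "\<forall>t\<in>{0..b}. w m \<le> w t"
    using continuous_attains_inf[OF compact_Icc _ w(1)] assms(2) by fastforce
  have "b * w m \<le> integral {0..b} w"
    using integral_le[OF integrable_const_ivl set_borel_integral_eq_integral(1)[OF wI], of "w m"] m assms(2)
    by (simp add: content_real)
  then have Iw: "integral {0..b} w > 0"
    using w(2)[OF m(1)] assms(2) by (smt (verit) mult_pos_pos)
  \<comment> \<open>the constant function with the right normalisation is admissible\<close>
  define k where "k = integral {0..b} w powr (- 1 / p)"
  have "\<bar>k\<bar> powr p = integral {0..b} w powr ((- 1 / p) * p)"
    by (simp add: k_def powr_powr)
  also have "\<dots> = 1 / integral {0..b} w"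
    using Iw assms(1) by (simp add: powr_minus_divide)
  finally have "(LBINT t:{0..b}. \<bar>k\<bar> powr p * w t) = 1"
    using set_borel_integral_eq_integral(2)[OF wI] Iw by simp
  moreover have "set_integrable lborel {0..b} (\<lambda>t. c)" for c :: real
    unfolding set_integrable_def by (rule borel_integrable_compact[OF compact_Icc continuous_on_const])
  then have "W1p_pair p b (\<lambda>t. k) (\<lambda>t. 0)"
    unfolding W1p_pair_def using assms(1) by (simp add: set_lebesgue_integral_def)
  ultimately have "(LBINT t:{0..b}. \<bar>(\<lambda>t::real. 0::real) t\<bar> powr p * w t) + \<alpha> * \<bar>(\<lambda>t. k) 0\<bar> powr p
      \<in> {(LBINT t:{0..b}. \<bar>g t\<bar> powr p * w t) + \<alpha> * \<bar>v 0\<bar> powr p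
        | v g. W1p_pair p b v g \<and> (LBINT t:{0..b}. \<bar>v t\<bar> powr p * w t) = 1}"
    by (intro CollectI exI[where x = "\<lambda>t. k"] exI[where x = "\<lambda>t::real. 0::real"]) simp
  then show ?thesis
    unfolding lam_bar_def by (rule cInf_greatest[OF ex_in_conv[THEN iffD1, OF exI]]) (use lower in blast)
qed

lemma picone_pointwise:
  assumes "1 < p" "0 \<le> r" "0 \<le> W" "0 \<le> q" "q \<le> W * r powr (p - 1)"
  shows "p * q * spow p s * g \<le> W * \<bar>g\<bar> powr p + (p - 1) * W * r powr p * \<bar>s\<bar> powr p"
proof -
  have "spow p s * g \<le> \<bar>s\<bar> powr (p - 1) * \<bar>g\<bar>"
    using abs_ge_self[of "spow p s * g"] by (simp add: abs_mult abs_spow)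
  then have "p * q * (spow p s * g) \<le> p * q * (\<bar>s\<bar> powr (p - 1) * \<bar>g\<bar>)"
    using assms by (intro mult_left_mono) auto
  also have "\<dots> \<le> p * (W * r powr (p - 1)) * (\<bar>s\<bar> powr (p - 1) * \<bar>g\<bar>)"
    using assms by (intro mult_right_mono mult_left_mono) auto
  also have "\<dots> = W * (p * (r * \<bar>s\<bar>) powr (p - 1) * \<bar>g\<bar>)"
    using assms(2) by (simp add: powr_mult)
  also have "\<dots> \<le> W * (\<bar>g\<bar> powr p + (p - 1) * (r * \<bar>s\<bar>) powr p)"
    using powr_tangent_le[OF assms(1), of "\<bar>g\<bar>" "r * \<bar>s\<bar>"] assms by (intro mult_left_mono) auto
  finally show ?thesis
    using assms(2) by (simp add: powr_mult algebra_simps)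
qed

lemma picone_rayleigh_bound:
  fixes Q Q' w v g :: "real \<Rightarrow> real"
  assumes "1 < p" "0 < b" and w: "continuous_on {0..b} w"
    and "continuous_on {0..b} Q" "continuous_on {0..b} Q'"
    and "\<And>t. 0 < t \<Longrightarrow> t < b \<Longrightarrow> (Q has_real_derivative Q' t) (at t)"
    and "\<And>t. t \<in> {0..b} \<Longrightarrow> 0 \<le> Q t"
    and pointwise: "\<And>t s r. t \<in> {0..b} \<Longrightarrow>
      p * Q t * spow p s * r + Q' t * \<bar>s\<bar> powr p \<le> \<bar>r\<bar> powr p * w t - lam * (\<bar>s\<bar> powr p * w t)"
    and W1p: "W1p_pair p b v g" and normalised: "(LBINT t:{0..b}. \<bar>v t\<bar> powr p * w t) = 1"
  shows "Q b * \<bar>v b\<bar> powr p - Q 0 * \<bar>v 0\<bar> powr p \<le> (LBINT t:{0..b}. \<bar>g t\<bar> powr p * w t) - lam"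
proof -
  interpret picone_data p 0 b Q Q' v g
  proof
    show "g absolutely_integrable_on {0..b}"
      by (rule W1p_pair_integral_representation(1)[OF W1p])
    show "v x = v 0 + integral {0..x} g" if "x \<in> {0..b}" for x
      by (rule W1p_pair_integral_representation(3)[OF W1p that])
    show "0 \<le> b"
      using assms(2) by simp
  qed (fact assms)+
  have gw: "set_integrable lborel {0..b} (\<lambda>t. \<bar>g t\<bar> powr p * w t)"
    by (rule set_integrable_mult_continuous_Icc[OF _ w]) (use W1p in \<open>simp add: W1p_pair_def\<close>)
  have vw: "set_integrable lborel {0..b} (\<lambda>t. \<bar>v t\<bar> powr p * w t)"
  proof (rule ccontr)
    assume "\<not> ?thesis"
    then have "(LBINT t:{0..b}. \<bar>v t\<bar> powr p * w t) = 0"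
      unfolding set_integrable_def set_lebesgue_integral_def by (rule not_integrable_integral_eq)
    then show False
      using normalised by simp
  qed
  note gw' = set_borel_integral_eq_integral[OF gw] and vw' = set_borel_integral_eq_integral[OF vw]
  have "Q b * \<bar>v b\<bar> powr p - Q 0 * \<bar>v 0\<bar> powr p \<le> integral {0..b} integrand"
    by (rule picone_integral_inequality)
  also have "\<dots> \<le> integral {0..b} (\<lambda>t. \<bar>g t\<bar> powr p * w t - lam * (\<bar>v t\<bar> powr p * w t))"
    using pointwise unfolding integrand_def
    by (intro integral_le integrable_integrand[unfolded integrand_def] integrable_diff
        integrable_on_mult_right gw'(1) vw'(1))
  also have "\<dots> = (LBINT t:{0..b}. \<bar>g t\<bar> powr p * w t) - lam"
    using gw' vw' normalised by (simp add: integral_diff integrable_on_mult_right)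
  finally show ?thesis .
qed

section \<open>The first eigenfunction\<close>

locale first_eigenfunction =
  fixes p R \<alpha> :: real and w u du :: "real \<Rightarrow> real"
  assumes p_gt1: "1 < p" and R_pos: "0 < R"
    and smooth_w: "smooth_on_interval R w" and w_pos: "\<And>t. t \<in> {0..R} \<Longrightarrow> w t > 0" and w_0: "w 0 = 1"
    and eigenfunction: "is_eigenfunction p R w \<alpha> (lam_bar p R w \<alpha>) u du"
    and u_pos: "\<And>t. t \<in> {0..R} \<Longrightarrow> u t > 0"
begin

abbreviation "lam \<equiv> lam_bar p R w \<alpha>"

lemma w_has_derivative: "t \<in> {0..R} \<Longrightarrow> (w has_real_derivative deriv w t) (at t)"
  using smooth_w[unfolded smooth_on_interval_def, rule_format, of t 0] by simp

lemma deriv_w_has_derivative: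
  "t \<in> {0..R} \<Longrightarrow> (deriv w has_real_derivative deriv (deriv w) t) (at t)"
  using smooth_w[unfolded smooth_on_interval_def, rule_format, of t 1] by (simp add: numeral_2_eq_2)

lemma continuous_on_w: "continuous_on {0..R} w"
  by (rule DERIV_continuous_on[OF has_field_derivative_at_within[OF w_has_derivative]])

lemma u_has_derivative: "t \<in> {0..R} \<Longrightarrow> (u has_real_derivative du t) (at t within {0..R})"
  using eigenfunction unfolding is_eigenfunction_def by blast

lemma spow_du_has_derivative: "t \<in> {0..R} \<Longrightarrow> ((\<lambda>s. spow p (du s)) has_real_derivative
    - lam * spow p (u t) - deriv w t / w t * spow p (du t)) (at t within {0..R})"
  using eigenfunction unfolding is_eigenfunction_def by blast

lemma boundary_0: "spow p (du 0) = \<alpha> * spow p (u 0)"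
  and boundary_R: "du R = 0"
  using eigenfunction unfolding is_eigenfunction_def by blast+

definition flux :: "real \<Rightarrow> real" where
  "flux t = w t * spow p (du t)"

lemma weighted_spow_u_pos: "t \<in> {0..R} \<Longrightarrow> w t * spow p (u t) > 0"
  by (simp add: w_pos u_pos spow_gt0_iff)

lemma flux_has_derivative:
  assumes "0 < t" "t < R"
  shows "(flux has_real_derivative - lam * (w t * spow p (u t))) (at t)"
proof -
  have t: "t \<in> {0..R}" "w t > 0" using assms w_pos by auto
  have "((\<lambda>s. spow p (du s)) has_real_derivative
      - lam * spow p (u t) - deriv w t / w t * spow p (du t)) (at t)"
    using spow_du_has_derivative[OF t(1)] at_within_Icc_at[OF assms] by simp
  from DERIV_mult[OF w_has_derivative[OF t(1)] this]
  show ?thesis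
    using t unfolding flux_def[abs_def] by (simp add: field_simps)
qed

lemma continuous_on_flux: "continuous_on {0..R} flux"
  unfolding flux_def[abs_def]
  by (intro continuous_intros continuous_on_w DERIV_continuous_on[OF spow_du_has_derivative])

lemma flux_0: "flux 0 = \<alpha> * u 0 powr (p - 1)"
  using boundary_0 w_0 u_pos[of 0] R_pos by (simp add: flux_def spow_pos)

lemma flux_R: "flux R = 0"
  by (simp add: flux_def boundary_R spow_def)

lemma lam_pos_of_alpha_pos:
  assumes "\<alpha> > 0"
  shows "lam > 0"
proof (rule ccontr)
  assume "\<not> lam > 0"
  have "flux 0 \<le> flux R"
  proof (rule DERIV_nonneg_imp_increasing_open[OF less_imp_le[OF R_pos] _ continuous_on_flux])
    fix t assume t: "0 < t" "t < R"
    then have "- lam * (w t * spow p (u t)) \<ge> 0"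
      using \<open>\<not> lam > 0\<close> weighted_spow_u_pos[of t] mult_nonpos_nonneg[of lam] by simp
    then show "\<exists>y. (flux has_real_derivative y) (at t) \<and> y \<ge> 0"
      using flux_has_derivative[OF t] by blast
  qed
  moreover have "u 0 powr (p - 1) > 0"
    using u_pos[of 0] R_pos by simp
  ultimately show False
    using flux_0 flux_R assms by (simp add: mult_le_0_iff)
qed

lemma lam_neg_of_alpha_neg:
  assumes "\<alpha> < 0"
  shows "lam < 0"
proof (rule ccontr)
  assume "\<not> lam < 0"
  have "flux R \<le> flux 0"
  proof (rule DERIV_nonpos_imp_decreasing_open[OF less_imp_le[OF R_pos] _ continuous_on_flux])
    fix t assume t: "0 < t" "t < R"
    then have "- lam * (w t * spow p (u t)) \<le> 0"
      using \<open>\<not> lam < 0\<close> weighted_spow_u_pos[of t] mult_nonneg_nonneg[of lam] by simp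
    then show "\<exists>y. (flux has_real_derivative y) (at t) \<and> y \<le> 0"
      using flux_has_derivative[OF t] by blast
  qed
  moreover have "u 0 powr (p - 1) > 0"
    using u_pos[of 0] R_pos by simp
  ultimately show False
    using flux_0 flux_R assms by (simp add: zero_le_mult_iff)
qed

lemma du_pos_of_alpha_pos:
  assumes "\<alpha> > 0" "t \<in> {0..<R}"
  shows "du t > 0"
proof -
  have "flux R < flux t"
  proof (rule DERIV_neg_imp_decreasing_open[where f = flux])
    show "t < R" using assms by simp
    show "continuous_on {t..R} flux"
      using continuous_on_flux by (rule continuous_on_subset) (use assms in auto)
    fix x assume x: "t < x" "x < R"
    then have "- lam * (w x * spow p (u x)) < 0"
      using lam_pos_of_alpha_pos[OF assms(1)] weighted_spow_u_pos[of x] assms by simp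
    then show "\<exists>y. (flux has_real_derivative y) (at x) \<and> y < 0"
      using flux_has_derivative[of x] x assms by auto
  qed
  then have "w t * spow p (du t) > 0"
    unfolding flux_R by (simp add: flux_def)
  then show ?thesis
    using w_pos[of t] assms by (auto simp: zero_less_mult_iff spow_gt0_iff)
qed

lemma du_neg_of_alpha_neg:
  assumes "\<alpha> < 0" "t \<in> {0..<R}"
  shows "du t < 0"
proof -
  have "flux t < flux R"
  proof (rule DERIV_pos_imp_increasing_open[where f = flux])
    show "t < R" using assms by simp
    show "continuous_on {t..R} flux"
      using continuous_on_flux by (rule continuous_on_subset) (use assms in auto)
    fix x assume x: "t < x" "x < R"
    then have "- lam * (w x * spow p (u x)) > 0"
      using lam_neg_of_alpha_neg[OF assms(1)] weighted_spow_u_pos[of x] assms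
      by (simp add: mult_neg_pos)
    then show "\<exists>y. (flux has_real_derivative y) (at x) \<and> y > 0"
      using flux_has_derivative[of x] x assms by auto
  qed
  then have "w t * spow p (du t) < 0"
    unfolding flux_R by (simp add: flux_def)
  then show ?thesis
    using w_pos[of t] assms by (auto simp: mult_less_0_iff spow_lt0_iff)
qed

definition z :: "real \<Rightarrow> real" where
  "z t = spow p (du t) * u t powr (1 - p)"

lemma z_eq_spow_ratio: "t \<in> {0..R} \<Longrightarrow> z t = spow p (du t / u t)"
  by (simp add: z_def spow_divide_pos u_pos)

definition riccati :: "real \<Rightarrow> real" where
  "riccati t = - lam - deriv w t / w t * z t - (p - 1) * \<bar>z t\<bar> powr (p / (p - 1))"

lemma z_has_derivative:
  assumes "0 < t" "t < R"
  shows "(z has_real_derivative riccati t) (at t)"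
proof -
  have t: "t \<in> {0..R}" "u t > 0" using assms u_pos by auto
  have "((\<lambda>s. spow p (du s)) has_real_derivative
      - lam * spow p (u t) - deriv w t / w t * spow p (du t)) (at t)"
    using spow_du_has_derivative[OF t(1)] at_within_Icc_at[OF assms] by simp
  moreover have "(u has_real_derivative du t) (at t)"
    using u_has_derivative[OF t(1)] at_within_Icc_at[OF assms] by simp
  ultimately have "(z has_real_derivative (- lam * spow p (u t) - deriv w t / w t * spow p (du t)) * u t powr (1 - p)
      + (1 - p) * u t powr (1 - p - of_nat 1) * du t * spow p (du t)) (at t)"
    unfolding z_def[abs_def] using DERIV_mult DERIV_fun_powr t(2) by blast
  moreover have "(- lam * spow p (u t) - deriv w t / w t * spow p (du t)) * u t powr (1 - p)
      + (1 - p) * u t powr (1 - p - of_nat 1) * du t * spow p (du t) = riccati t"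
    using riccati_identity[OF t(2) p_gt1, of lam "deriv w t / w t" "du t"]
    by (simp add: riccati_def z_def)
  ultimately show ?thesis
    by simp
qed

lemma continuous_on_z: "continuous_on {0..R} z"
proof -
  have "\<forall>t\<in>{0..R}. u t \<noteq> 0"
    using u_pos by (metis less_irrefl)
  then show ?thesis
    unfolding z_def[abs_def]
    by (intro continuous_intros DERIV_continuous_on[OF spow_du_has_derivative]
        DERIV_continuous_on[OF u_has_derivative])
qed

lemma z_0: "z 0 = \<alpha>"
  using u_pos[of 0] R_pos boundary_0 by (simp add: z_def spow_pos flip: powr_add)

lemma z_R: "z R = 0"
  by (simp add: z_def boundary_R spow_def)

lemma z_pos_of_alpha_pos: "\<alpha> > 0 \<Longrightarrow> t \<in> {0..<R} \<Longrightarrow> z t > 0"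
  using du_pos_of_alpha_pos u_pos[of t] by (simp add: z_def spow_gt0_iff)

lemma z_neg_of_alpha_neg: "\<alpha> < 0 \<Longrightarrow> t \<in> {0..<R} \<Longrightarrow> z t < 0"
  using du_neg_of_alpha_neg u_pos[of t] by (simp add: z_def spow_lt0_iff mult_neg_pos)

lemma log_w_second_derivative:
  assumes "0 < t" "t < R"
  shows "((\<lambda>s. deriv w s / w s) has_real_derivative deriv (deriv (\<lambda>s. ln (w s))) t) (at t)"
proof -
  have t: "t \<in> {0..R}" using assms by auto
  obtain D where D: "((\<lambda>s. deriv w s / w s) has_real_derivative D) (at t)"
    using DERIV_divide[OF deriv_w_has_derivative[OF t] w_has_derivative[OF t]] w_pos[OF t] by force
  have "deriv (\<lambda>s. ln (w s)) s = deriv w s / w s" if "s \<in> {0<..<R}" for s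
    using DERIV_chain2[OF DERIV_ln_divide[OF w_pos] w_has_derivative, of s] that
    by (simp add: DERIV_imp_deriv)
  then have "(deriv (\<lambda>s. ln (w s)) has_real_derivative D) (at t)"
    by (intro has_field_derivative_transform_within_open[OF D, where S = "{0<..<R}"]) (use assms in auto)
  then show ?thesis
    using D by (simp add: DERIV_imp_deriv)
qed

lemma riccati_has_derivative_at_zero:
  assumes t: "0 < t" "t < R" and "z t \<noteq> 0" and "riccati t = 0"
  shows "(riccati has_real_derivative - deriv (deriv (\<lambda>s. ln (w s))) t * z t) (at t)"
proof -
  have "((\<lambda>s. - lam - deriv w s / w s * z s - (p - 1) * \<bar>z s\<bar> powr (p / (p - 1)))
      has_real_derivative - deriv (deriv (\<lambda>s. ln (w s))) t * z t) (at t)"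
    by (rule DERIV_cong[OF DERIV_diff[OF DERIV_diff[OF DERIV_const
          DERIV_mult[OF log_w_second_derivative[OF t] z_has_derivative[OF t]]]
          DERIV_cmult[OF DERIV_chain2[OF abs_powr_has_real_derivative[OF assms(3)] z_has_derivative[OF t]]]]])
       (use assms(4) in simp)
  then show ?thesis
    unfolding riccati_def[abs_def] .
qed

lemma z_antitone_of_alpha_pos:
  assumes "\<alpha> > 0" and log_concave: "\<forall>t\<in>{0..<R}. deriv (deriv (\<lambda>s. ln (w s))) t < 0"
    and "s \<in> {0..R}" "t \<in> {0..R}" "s \<le> t"
  shows "z t \<le> z s"
proof -
  have riccati_nonpos: "riccati x \<le> 0" if "0 < x" "x < R" for x
  proof (rule derivative_nonpos_of_left_negative_zeros[OF R_pos continuous_on_z z_has_derivative _ _ that])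
    fix y assume y: "0 < y" "y < R"
    have "z y > 0"
      using z_pos_of_alpha_pos[OF assms(1)] y by simp
    then show "z R < z y"
      by (simp add: z_R)
    assume "riccati y = 0"
    moreover have "- deriv (deriv (\<lambda>s. ln (w s))) y * z y > 0"
      using log_concave y \<open>z y > 0\<close> by (simp add: mult_neg_pos)
    ultimately show "\<exists>d>0. \<forall>h>0. h < d \<longrightarrow> riccati (y - h) < 0"
      using DERIV_pos_inc_left[OF riccati_has_derivative_at_zero[OF y]] \<open>z y > 0\<close> by force
  qed
  show ?thesis
  proof (rule DERIV_nonpos_imp_decreasing_open[OF assms(5)])
    show "continuous_on {s..t} z"
      using continuous_on_z by (rule continuous_on_subset) (use assms in auto)
    fix x assume "s < x" "x < t"
    then show "\<exists>y. (z has_real_derivative y) (at x) \<and> y \<le> 0"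
      using z_has_derivative[of x] riccati_nonpos[of x] assms(3,4) by auto
  qed
qed

lemma z_mono_of_alpha_neg:
  assumes "\<alpha> < 0" and log_concave: "\<forall>t\<in>{0..<R}. deriv (deriv (\<lambda>s. ln (w s))) t < 0"
    and "s \<in> {0..R}" "t \<in> {0..R}" "s \<le> t"
  shows "z s \<le> z t"
proof -
  have riccati_nonneg: "- riccati x \<le> 0" if "0 < x" "x < R" for x
  proof (rule derivative_nonpos_of_left_negative_zeros[where f = "\<lambda>s. - z s", OF R_pos _ _ _ _ that])
    show "continuous_on {0..R} (\<lambda>s. - z s)"
      using continuous_on_z by (intro continuous_intros)
    show "((\<lambda>s. - z s) has_real_derivative - riccati y) (at y)" if "0 < y" "y < R" for y
      using DERIV_minus[OF z_has_derivative[OF that]] .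
    fix y assume y: "0 < y" "y < R"
    have "z y < 0"
      using z_neg_of_alpha_neg[OF assms(1)] y by simp
    then show "- z R < - z y"
      by (simp add: z_R)
    assume "- riccati y = 0"
    moreover have "deriv (deriv (\<lambda>s. ln (w s))) y * z y > 0"
      using log_concave y \<open>z y < 0\<close> by (simp add: mult_neg_neg)
    ultimately show "\<exists>d>0. \<forall>h>0. h < d \<longrightarrow> - riccati (y - h) < 0"
      using DERIV_pos_inc_left[OF DERIV_minus[OF riccati_has_derivative_at_zero[OF y]]] \<open>z y < 0\<close>
      by force
  qed
  show ?thesis
  proof (rule DERIV_nonneg_imp_increasing_open[OF assms(5)])
    show "continuous_on {s..t} z"
      using continuous_on_z by (rule continuous_on_subset) (use assms in auto)
    fix x assume "s < x" "x < t"
    then show "\<exists>y. (z has_real_derivative y) (at x) \<and> y \<ge> 0"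
      using z_has_derivative[of x] riccati_nonneg[of x] assms(3,4) by auto
  qed
qed

lemma ratio_le_iff_z_le:
  "s \<in> {0..R} \<Longrightarrow> t \<in> {0..R} \<Longrightarrow> du t / u t \<le> du s / u s \<longleftrightarrow> z t \<le> z s"
  by (simp add: z_eq_spow_ratio strict_mono_less_eq[OF spow_strict_mono[OF p_gt1]])

lemma abs_ratio_powr_eq: "t \<in> {0..R} \<Longrightarrow> \<bar>du t / u t\<bar> powr (p - 1) = \<bar>z t\<bar>"
  by (simp add: z_eq_spow_ratio abs_spow)

lemma weighted_z_has_derivative:
  assumes "0 < t" "t < R"
  shows "((\<lambda>s. w s * z s) has_real_derivative
    - lam * w t - (p - 1) * w t * \<bar>z t\<bar> powr (p / (p - 1))) (at t)"
proof -
  have "t \<in> {0..R}" "w t > 0"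
    using assms w_pos by auto
  have "deriv w t * z t + riccati t * w t = - lam * w t - (p - 1) * w t * \<bar>z t\<bar> powr (p / (p - 1))"
    using \<open>w t > 0\<close> by (simp add: riccati_def field_simps)
  with DERIV_mult[OF w_has_derivative[OF \<open>t \<in> {0..R}\<close>] z_has_derivative[OF assms]]
  show ?thesis
    by simp
qed

lemma eigen_picone_pointwise:
  assumes "\<alpha> > 0" "t \<in> {0..<R}" "0 \<le> q" "q \<le> w t * z t"
  shows "p * q * spow p s * g - (lam * w t + (p - 1) * w t * \<bar>z t\<bar> powr (p / (p - 1))) * \<bar>s\<bar> powr p
    \<le> \<bar>g\<bar> powr p * w t - lam * (\<bar>s\<bar> powr p * w t)"
proof -
  define r where "r = du t / u t"
  have t: "t \<in> {0..R}" "0 \<le> r" "0 < w t"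
    using assms du_pos_of_alpha_pos[OF assms(1,2)] u_pos[of t] w_pos[of t] by (auto simp: r_def)
  then have zr: "z t = r powr (p - 1)"
    by (simp add: z_eq_spow_ratio r_def spow_nonneg_eq)
  then have "\<bar>z t\<bar> powr (p / (p - 1)) = r powr p"
    using p_gt1 by (simp add: powr_powr)
  moreover have "p * q * spow p s * g \<le> w t * \<bar>g\<bar> powr p + (p - 1) * w t * r powr p * \<bar>s\<bar> powr p"
    using picone_pointwise[OF p_gt1 t(2) less_imp_le[OF t(3)] assms(3)] assms(4) zr by simp
  ultimately show ?thesis
    by (simp add: algebra_simps)
qed

lemma tilted_picone_rayleigh_bound:
  assumes "\<alpha> > 0" "0 < b" "b < R" "0 < \<epsilon>" "0 < W"
    and below: "\<And>t. t \<in> {0..b} \<Longrightarrow> \<epsilon> * b \<le> w t * z t"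
    and above: "\<And>t. t \<in> {0..b} \<Longrightarrow> w t \<le> W"
    and W1p: "W1p_pair p b v g" and normalised: "(LBINT t:{0..b}. \<bar>v t\<bar> powr p * w t) = 1"
  shows "lam + \<epsilon> / W \<le> (LBINT t:{0..b}. \<bar>g t\<bar> powr p * w t) + \<alpha> * \<bar>v 0\<bar> powr p"
proof -
  have in_R: "t \<in> {0..<R}" if "t \<in> {0..b}" for t
    using that assms by auto
  have wc: "continuous_on {0..b} w" and zc: "continuous_on {0..b} z"
    using continuous_on_subset[OF continuous_on_w] continuous_on_subset[OF continuous_on_z] assms by auto
  define Q where "Q t = w t * z t - \<epsilon> * t" for t
  define Q' where "Q' t = - lam * w t - (p - 1) * w t * \<bar>z t\<bar> powr (p / (p - 1)) - \<epsilon>" for t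
  have Q_nonneg: "0 \<le> Q t" if "t \<in> {0..b}" for t
  proof -
    have "\<epsilon> * t \<le> \<epsilon> * b"
      using that \<open>0 < \<epsilon>\<close> by simp
    then show ?thesis
      using below[OF that] by (simp add: Q_def)
  qed
  have "Q b * \<bar>v b\<bar> powr p - Q 0 * \<bar>v 0\<bar> powr p \<le> (LBINT t:{0..b}. \<bar>g t\<bar> powr p * w t) - (lam + \<epsilon> / W)"
  proof (rule picone_rayleigh_bound[OF p_gt1 assms(2) wc _ _ _ Q_nonneg _ W1p normalised])
    show "continuous_on {0..b} Q"
      unfolding Q_def by (intro continuous_intros wc zc)
    show "continuous_on {0..b} Q'"
      unfolding Q'_def using z_pos_of_alpha_pos[OF assms(1) in_R]
      by (intro continuous_intros wc zc continuous_on_powr') (force+)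
    show "(Q has_real_derivative Q' t) (at t)" if "0 < t" "t < b" for t
      unfolding Q_def[abs_def] Q'_def
      using DERIV_diff[OF weighted_z_has_derivative DERIV_cmult[OF DERIV_ident]] that assms by simp
    fix t s r assume t: "t \<in> {0..b}"
    have "\<epsilon> * (w t / W) * \<bar>s\<bar> powr p \<le> \<epsilon> * \<bar>s\<bar> powr p"
      using above[OF t] \<open>0 < W\<close> \<open>0 < \<epsilon>\<close> by (intro mult_right_mono mult_left_le) auto
    moreover have "Q t \<le> w t * z t"
      using \<open>0 < \<epsilon>\<close> t by (simp add: Q_def)
    ultimately show "p * Q t * spow p s * r + Q' t * \<bar>s\<bar> powr p
        \<le> \<bar>r\<bar> powr p * w t - (lam + \<epsilon> / W) * (\<bar>s\<bar> powr p * w t)"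
      using eigen_picone_pointwise[OF assms(1) in_R[OF t] Q_nonneg[OF t], of s r]
      by (simp add: Q'_def algebra_simps)
  qed
  moreover have "Q 0 * \<bar>v 0\<bar> powr p = \<alpha> * \<bar>v 0\<bar> powr p"
    by (simp add: Q_def w_0 z_0)
  moreover have "Q b * \<bar>v b\<bar> powr p \<ge> 0"
    using Q_nonneg[of b] assms(2) by simp
  ultimately show ?thesis
    by linarith
qed

lemma lam_less_lam_bar_of_shorter:
  assumes "\<alpha> > 0" "0 < b" "b < R"
  shows "lam < lam_bar p b w \<alpha>"
proof -
  have wc: "continuous_on {0..b} w" and zc: "continuous_on {0..b} z"
    using continuous_on_subset[OF continuous_on_w] continuous_on_subset[OF continuous_on_z] assms by auto
  have w_pos': "w t > 0" if "t \<in> {0..b}" for t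
    using w_pos that assms by simp
  obtain tm where tm: "tm \<in> {0..b}" "\<forall>t\<in>{0..b}. w tm * z tm \<le> w t * z t"
    using continuous_attains_inf[OF compact_Icc _ continuous_on_mult[OF wc zc]] assms(2) by fastforce
  obtain tW where tW: "tW \<in> {0..b}" "\<forall>t\<in>{0..b}. w t \<le> w tW"
    using continuous_attains_sup[OF compact_Icc _ wc] assms(2) by fastforce
  \<comment> \<open>tilting the Picone weight w z by \<epsilon> t keeps it nonnegative on [0,b] and gains \<epsilon> / max w\<close>
  define \<epsilon> where "\<epsilon> = w tm * z tm / b"
  have "\<epsilon> > 0"
    using z_pos_of_alpha_pos[OF assms(1), of tm] w_pos'[OF tm(1)] tm(1) assms by (simp add: \<epsilon>_def)
  have "lam + \<epsilon> / w tW \<le> lam_bar p b w \<alpha>"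
  proof (rule le_lam_bar[OF _ assms(2) wc w_pos'])
    show "0 < p" using p_gt1 by simp
  next
    fix v g assume "W1p_pair p b v g" "(LBINT t:{0..b}. \<bar>v t\<bar> powr p * w t) = 1"
    then show "lam + \<epsilon> / w tW \<le> (LBINT t:{0..b}. \<bar>g t\<bar> powr p * w t) + \<alpha> * \<bar>v 0\<bar> powr p"
      using tilted_picone_rayleigh_bound[OF assms \<open>\<epsilon> > 0\<close> w_pos'[OF tW(1)]] tm tW assms(2)
      by (simp add: \<epsilon>_def)
  qed
  moreover have "lam < lam + \<epsilon> / w tW"
    using \<open>\<epsilon> > 0\<close> w_pos'[OF tW(1)] by simp
  ultimately show ?thesis
    by linarith
qed

lemma ratio_antitone_of_alpha_pos:
  assumes "\<alpha> > 0" "\<forall>t\<in>{0..<R}. deriv (deriv (\<lambda>s. ln (w s))) t < 0"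
    and "s \<in> {0..R}" "t \<in> {0..R}" "s \<le> t"
  shows "du t / u t \<le> du s / u s"
  using z_antitone_of_alpha_pos[OF assms] ratio_le_iff_z_le[OF assms(3,4)] by simp

lemma ratio_mono_of_alpha_neg:
  assumes "\<alpha> < 0" "\<forall>t\<in>{0..<R}. deriv (deriv (\<lambda>s. ln (w s))) t < 0"
    and "s \<in> {0..R}" "t \<in> {0..R}" "s \<le> t"
  shows "du s / u s \<le> du t / u t"
  using z_mono_of_alpha_neg[OF assms] ratio_le_iff_z_le[OF assms(4,3)] by simp

lemma abs_ratio_powr_le_of_alpha_pos:
  assumes "\<alpha> > 0" "\<forall>t\<in>{0..<R}. deriv (deriv (\<lambda>s. ln (w s))) t < 0" and "t \<in> {0..R}"
  shows "\<bar>du t / u t\<bar> powr (p - 1) \<le> \<alpha>"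
proof -
  have "0 \<le> z t" "z t \<le> \<alpha>"
    using z_antitone_of_alpha_pos[OF assms(1,2), of t R] z_antitone_of_alpha_pos[OF assms(1,2), of 0 t]
      assms(3) R_pos by (auto simp: z_R z_0)
  then show ?thesis
    using abs_ratio_powr_eq[OF assms(3)] by simp
qed

lemma abs_ratio_powr_le_of_alpha_neg:
  assumes "\<alpha> < 0" "\<forall>t\<in>{0..<R}. deriv (deriv (\<lambda>s. ln (w s))) t < 0" and "t \<in> {0..R}"
  shows "\<bar>du t / u t\<bar> powr (p - 1) \<le> - \<alpha>"
proof -
  have "z t \<le> 0" "\<alpha> \<le> z t"
    using z_mono_of_alpha_neg[OF assms(1,2), of t R] z_mono_of_alpha_neg[OF assms(1,2), of 0 t]
      assms(3) R_pos by (auto simp: z_R z_0)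
  then show ?thesis
    using abs_ratio_powr_eq[OF assms(3)] by simp
qed

end

theorem proposition2p1:
  fixes p R \<alpha> :: real and w u du :: "real \<Rightarrow> real"
  assumes "1 < p" and "0 < R" and "\<alpha> \<noteq> 0"
    and "smooth_on_interval R w" and "\<forall>t\<in>{0..R}. w t > 0" and "w 0 = 1"
    and "is_eigenfunction p R w \<alpha> (lam_bar p R w \<alpha>) u du"
    and "\<forall>t\<in>{0..R}. u t > 0"
  shows "(\<alpha> > 0 \<longrightarrow> (\<forall>t\<in>{0..<R}. du t > 0))
    \<and> (\<alpha> < 0 \<longrightarrow> (\<forall>t\<in>{0..<R}. du t < 0))
    \<and> (\<forall>Rb. \<alpha> > 0 \<and> 0 < Rb \<and> Rb < R \<longrightarrow> lam_bar p R w \<alpha> < lam_bar p Rb w \<alpha>)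
    \<and> ((\<forall>t\<in>{0..<R}. deriv (deriv (\<lambda>s. ln (w s))) t < 0) \<longrightarrow>
        (\<alpha> > 0 \<longrightarrow> (\<forall>s\<in>{0..R}. \<forall>t\<in>{0..R}. s \<le> t \<longrightarrow> du t / u t \<le> du s / u s)
                     \<and> (\<forall>t\<in>{0..R}. \<bar>du t / u t\<bar> powr (p - 1) \<le> \<alpha>))
      \<and> (\<alpha> < 0 \<longrightarrow> (\<forall>s\<in>{0..R}. \<forall>t\<in>{0..R}. s \<le> t \<longrightarrow> du s / u s \<le> du t / u t)
                     \<and> (\<forall>t\<in>{0..R}. \<bar>du t / u t\<bar> powr (p - 1) \<le> - \<alpha>)))"
proof -
  interpret first_eigenfunction p R \<alpha> w u du
    using assms by unfold_locales auto
  show ?thesis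
    using du_pos_of_alpha_pos du_neg_of_alpha_neg lam_less_lam_bar_of_shorter
      ratio_antitone_of_alpha_pos ratio_mono_of_alpha_neg
      abs_ratio_powr_le_of_alpha_pos abs_ratio_powr_le_of_alpha_neg
    by blast
qed

end
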